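(* Let $x$ be a stable g-matching with $x\ne x^{\max}$, let $f\in F$, and let $(a,c)$ be a legal $f$-pair under $x$. Then (i) $c\in U_F^-(x)$; (ii) $x_f\prec_f x_f+\mathbf 1^a-\mathbf 1^c$; and (iii) $c$ is not interesting for $f$ under $x_f+\mathbf 1^a-\mathbf 1^c$.
   Context: Let $G=(V,E)$ be a finite bipartite graph with color classes $W$ and $F$; the edge joining $w\in W$ and $f\in F$ is written $wf$. Let $b\in\mathbb Z_+^E$ be capacities. For $v\in V$, $E_v$ is the set of edges at $v$, $\mathcal B_v=\{z\in\mathbb Z_+^{E_v}: z\le b|_{E_v}\}$, $\mathbf 1^e$ the unit vector of $e$, $|z|=\sum_e|z(e)|$, $\wedge,\vee$ componentwise min/max. Each $v$ has a choice function $C_v:\mathcal B_v\to\mathcal B_v$ with $C_v(z)\le z$ and, for all $z,z'$: (A1) $z\ge z'\ge C_v(z)\Rightarrow C_v(z')=C_v(z)$; (A2) $z\ge z'\Rightarrow C_v(z)\wedge z'\le C_v(z')$; (A3) $z\ge z'\Rightarrow|C_v(z)|\ge|C_v(z')|$. $z$ is acceptable if $C_v(z)=z$; for distinct acceptable $z,z'$, $z'\prec_v z$ iff $C_v(z\vee z')=z$. $x_v$ = restriction of $x$ to $E_v$. A g-matching is $x\in\mathbb Z_+^E$, $x\le b$, each $x_v$ acceptable; $x\prec_F y$ (distinct) iff $x_f\preceq_f y_f$ for all $f\in F$. $e\in E_v$ is interesting for $v$ under acceptable $z$ if some $z'\in\mathcal B_v$ has $z'(e)>z(e)$, $z'(e')=z(e')$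 for $e'\neq e$, $C_v(z')(e)>z(e)$; $e=wf$ is interesting for $v\in\{w,f\}$ under a g-matching $x$ if so under $x_v$, and blocks $x$ if interesting for both endpoints; stable g-matchings (no blocking edge) form a finite lattice under $\prec_F$ with maximum $x^{\max}$. For stable $x$: $U_F^+(x)$ is the set of edges $wf$ interesting for $f$ under $x$; $U_F^-(x)$ is the set of edges $wf$ with $x(wf)>0$ not interesting for $f$ under $x$. A legal $f$-pair under $x$ is $(a,c)$ with $a\in U_F^+(x)\cap E_f$, $c\in E_f\setminus\{a\}$ and $C_f(x_f+\mathbf 1^a)=x_f+\mathbf 1^a-\mathbf 1^c$. *)

theory Defs
  imports Main
begin

text \<open>Edges of the bipartite graph are pairs (w,f) with w in W and f in F.
  Vectors in Z_+^E (or Z_+^{E_v}) are functions from edges to nat, vanishing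
  outside the relevant edge set.\<close>

type_synonym ('w,'f) vec = "'w \<times> 'f \<Rightarrow> nat"

definition unitv :: "'w \<times> 'f \<Rightarrow> ('w,'f) vec" where
  "unitv e = (\<lambda>e'. if e' = e then 1 else 0)"

definition edges_at_w :: "('w \<times> 'f) set \<Rightarrow> 'w \<Rightarrow> ('w \<times> 'f) set" where
  "edges_at_w E w = {e \<in> E. fst e = w}"

definition edges_at_f :: "('w \<times> 'f) set \<Rightarrow> 'f \<Rightarrow> ('w \<times> 'f) set" where
  "edges_at_f E f = {e \<in> E. snd e = f}"

definition restr :: "('w \<times> 'f) set \<Rightarrow> ('w,'f) vec \<Rightarrow> ('w,'f) vec" where
  "restr Ev x = (\<lambda>e. if e \<in> Ev then x e else 0)"

definition inB :: "('w \<times> 'f) set \<Rightarrow> ('w,'f) vec \<Rightarrow> ('w,'f) vec \<Rightarrow> bool" where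
  "inB Ev b z \<longleftrightarrow> (\<forall>e. z e \<le> b e) \<and> (\<forall>e. e \<notin> Ev \<longrightarrow> z e = 0)"

definition vnorm :: "('w \<times> 'f) set \<Rightarrow> ('w,'f) vec \<Rightarrow> nat" where
  "vnorm Ev z = (\<Sum>e\<in>Ev. z e)"

definition vmin :: "('w,'f) vec \<Rightarrow> ('w,'f) vec \<Rightarrow> ('w,'f) vec" where
  "vmin z z' = (\<lambda>e. min (z e) (z' e))"

definition vmax :: "('w,'f) vec \<Rightarrow> ('w,'f) vec \<Rightarrow> ('w,'f) vec" where
  "vmax z z' = (\<lambda>e. max (z e) (z' e))"

definition choice_function ::
  "('w \<times> 'f) set \<Rightarrow> ('w,'f) vec \<Rightarrow> (('w,'f) vec \<Rightarrow> ('w,'f) vec) \<Rightarrow> bool" where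
  "choice_function Ev b C \<longleftrightarrow>
     (\<forall>z. inB Ev b z \<longrightarrow> inB Ev b (C z) \<and> C z \<le> z) \<and>
     (\<forall>z z'. inB Ev b z \<longrightarrow> inB Ev b z' \<longrightarrow> z \<ge> z' \<longrightarrow> z' \<ge> C z \<longrightarrow> C z' = C z) \<and>
     (\<forall>z z'. inB Ev b z \<longrightarrow> inB Ev b z' \<longrightarrow> z \<ge> z' \<longrightarrow> vmin (C z) z' \<le> C z') \<and>
     (\<forall>z z'. inB Ev b z \<longrightarrow> inB Ev b z' \<longrightarrow> z \<ge> z' \<longrightarrow> vnorm Ev (C z) \<ge> vnorm Ev (C z'))"

definition acceptable :: "(('w,'f) vec \<Rightarrow> ('w,'f) vec) \<Rightarrow> ('w,'f) vec \<Rightarrow> bool" where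
  "acceptable C z \<longleftrightarrow> C z = z"

text \<open>pref C z' z means z' \<prec>_v z (for distinct acceptable z, z')\<close>
definition pref :: "(('w,'f) vec \<Rightarrow> ('w,'f) vec) \<Rightarrow> ('w,'f) vec \<Rightarrow> ('w,'f) vec \<Rightarrow> bool" where
  "pref C z' z \<longleftrightarrow> acceptable C z \<and> acceptable C z' \<and> z \<noteq> z' \<and> C (vmax z z') = z"

definition prefeq :: "(('w,'f) vec \<Rightarrow> ('w,'f) vec) \<Rightarrow> ('w,'f) vec \<Rightarrow> ('w,'f) vec \<Rightarrow> bool" where
  "prefeq C z' z \<longleftrightarrow> z' = z \<or> pref C z' z"

definition interesting ::
  "('w \<times> 'f) set \<Rightarrow> ('w,'f) vec \<Rightarrow> (('w,'f) vec \<Rightarrow> ('w,'f) vec) \<Rightarrow> ('w,'f) vec \<Rightarrow> 'w \<times> 'f \<Rightarrow> bool" where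
  "interesting Ev b C z e \<longleftrightarrow> e \<in> Ev \<and>
     (\<exists>z'. inB Ev b z' \<and> z' e > z e \<and> (\<forall>e'. e' \<noteq> e \<longrightarrow> z' e' = z e') \<and> C z' e > z e)"

definition instance_ok ::
  "'w set \<Rightarrow> 'f set \<Rightarrow> ('w \<times> 'f) set \<Rightarrow> ('w,'f) vec \<Rightarrow>
   ('w \<Rightarrow> ('w,'f) vec \<Rightarrow> ('w,'f) vec) \<Rightarrow> ('f \<Rightarrow> ('w,'f) vec \<Rightarrow> ('w,'f) vec) \<Rightarrow> bool" where
  "instance_ok W F E b CW CF \<longleftrightarrow> finite W \<and> finite F \<and> E \<subseteq> W \<times> F \<and>
     (\<forall>w\<in>W. choice_function (edges_at_w E w) b (CW w)) \<and>
     (\<forall>f\<in>F. choice_function (edges_at_f E f) b (CF f))"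

definition g_matching ::
  "'w set \<Rightarrow> 'f set \<Rightarrow> ('w \<times> 'f) set \<Rightarrow> ('w,'f) vec \<Rightarrow>
   ('w \<Rightarrow> ('w,'f) vec \<Rightarrow> ('w,'f) vec) \<Rightarrow> ('f \<Rightarrow> ('w,'f) vec \<Rightarrow> ('w,'f) vec) \<Rightarrow> ('w,'f) vec \<Rightarrow> bool" where
  "g_matching W F E b CW CF x \<longleftrightarrow> (\<forall>e. x e \<le> b e) \<and> (\<forall>e. e \<notin> E \<longrightarrow> x e = 0) \<and>
     (\<forall>w\<in>W. acceptable (CW w) (restr (edges_at_w E w) x)) \<and>
     (\<forall>f\<in>F. acceptable (CF f) (restr (edges_at_f E f) x))"

definition blocking ::
  "('w \<times> 'f) set \<Rightarrow> ('w,'f) vec \<Rightarrow>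
   ('w \<Rightarrow> ('w,'f) vec \<Rightarrow> ('w,'f) vec) \<Rightarrow> ('f \<Rightarrow> ('w,'f) vec \<Rightarrow> ('w,'f) vec) \<Rightarrow> ('w,'f) vec \<Rightarrow> 'w \<times> 'f \<Rightarrow> bool" where
  "blocking E b CW CF x e \<longleftrightarrow> e \<in> E \<and>
     interesting (edges_at_w E (fst e)) b (CW (fst e)) (restr (edges_at_w E (fst e)) x) e \<and>
     interesting (edges_at_f E (snd e)) b (CF (snd e)) (restr (edges_at_f E (snd e)) x) e"

definition stable ::
  "'w set \<Rightarrow> 'f set \<Rightarrow> ('w \<times> 'f) set \<Rightarrow> ('w,'f) vec \<Rightarrow>
   ('w \<Rightarrow> ('w,'f) vec \<Rightarrow> ('w,'f) vec) \<Rightarrow> ('f \<Rightarrow> ('w,'f) vec \<Rightarrow> ('w,'f) vec) \<Rightarrow> ('w,'f) vec \<Rightarrow> bool" where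
  "stable W F E b CW CF x \<longleftrightarrow> g_matching W F E b CW CF x \<and> (\<forall>e. \<not> blocking E b CW CF x e)"

definition prefF ::
  "'f set \<Rightarrow> ('w \<times> 'f) set \<Rightarrow> ('f \<Rightarrow> ('w,'f) vec \<Rightarrow> ('w,'f) vec) \<Rightarrow> ('w,'f) vec \<Rightarrow> ('w,'f) vec \<Rightarrow> bool" where
  "prefF F E CF x y \<longleftrightarrow> x \<noteq> y \<and>
     (\<forall>f\<in>F. prefeq (CF f) (restr (edges_at_f E f) x) (restr (edges_at_f E f) y))"

definition is_max_stable ::
  "'w set \<Rightarrow> 'f set \<Rightarrow> ('w \<times> 'f) set \<Rightarrow> ('w,'f) vec \<Rightarrow>
   ('w \<Rightarrow> ('w,'f) vec \<Rightarrow> ('w,'f) vec) \<Rightarrow> ('f \<Rightarrow> ('w,'f) vec \<Rightarrow> ('w,'f) vec) \<Rightarrow> ('w,'f) vec \<Rightarrow> bool" where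
  "is_max_stable W F E b CW CF xmax \<longleftrightarrow> stable W F E b CW CF xmax \<and>
     (\<forall>y. stable W F E b CW CF y \<longrightarrow> y = xmax \<or> prefF F E CF y xmax)"

definition UFplus ::
  "('w \<times> 'f) set \<Rightarrow> ('w,'f) vec \<Rightarrow> ('f \<Rightarrow> ('w,'f) vec \<Rightarrow> ('w,'f) vec) \<Rightarrow> ('w,'f) vec \<Rightarrow> ('w \<times> 'f) set" where
  "UFplus E b CF x = {e \<in> E. interesting (edges_at_f E (snd e)) b (CF (snd e)) (restr (edges_at_f E (snd e)) x) e}"

definition UFminus ::
  "('w \<times> 'f) set \<Rightarrow> ('w,'f) vec \<Rightarrow> ('f \<Rightarrow> ('w,'f) vec \<Rightarrow> ('w,'f) vec) \<Rightarrow> ('w,'f) vec \<Rightarrow> ('w \<times> 'f) set" where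
  "UFminus E b CF x = {e \<in> E. x e > 0 \<and>
     \<not> interesting (edges_at_f E (snd e)) b (CF (snd e)) (restr (edges_at_f E (snd e)) x) e}"

text \<open>(a,c) is a legal f-pair under x. The identity C_f(x_f+1^a) = x_f+1^a-1^c
  (over the integers) is written without subtraction as C_f(x_f+1^a) + 1^c = x_f + 1^a.\<close>
definition legal_pair ::
  "('w \<times> 'f) set \<Rightarrow> ('w,'f) vec \<Rightarrow> ('f \<Rightarrow> ('w,'f) vec \<Rightarrow> ('w,'f) vec) \<Rightarrow> ('w,'f) vec \<Rightarrow> 'f \<Rightarrow>
   'w \<times> 'f \<Rightarrow> 'w \<times> 'f \<Rightarrow> bool" where
  "legal_pair E b CF x f a c \<longleftrightarrow>
     a \<in> UFplus E b CF x \<inter> edges_at_f E f \<and> c \<in> edges_at_f E f - {a} \<and>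
     (\<lambda>e. CF f (\<lambda>e'. restr (edges_at_f E f) x e' + unitv a e') e + unitv c e)
       = (\<lambda>e. restr (edges_at_f E f) x e + unitv a e)"

end

theory Submission
  imports Defs
begin

text \<open>Everything happens at the single vertex \<open>f\<close>: the argument only uses that \<open>x\<^sub>f\<close> is
  acceptable and that \<open>C\<^sub>f\<close> satisfies (A1)--(A3). Let \<open>z = x\<^sub>f + 1\<^sup>a\<close> and \<open>y = C\<^sub>f(z) = z - 1\<^sup>c\<close>. By (A1) \<open>y\<close> is acceptable,
  and \<open>y \<or> x\<^sub>f = z\<close> gives \<open>x\<^sub>f \<prec> y\<close>. By (A2), \<open>c\<close> stays rejected from every enlargement of \<open>z\<close>,
  so it is not interesting under \<open>y\<close>. If \<open>c\<close> were interesting under \<open>x\<^sub>f\<close>, witnessed by \<open>w\<close>,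
  then for \<open>u = z \<or> w\<close> (A2) gives \<open>C\<^sub>f(u) \<le> y\<close>, and (A3) forces equality because
  \<open>|y| = |x\<^sub>f| \<le> |C\<^sub>f(w)| \<le> |C\<^sub>f(u)|\<close>; (A2) once more yields \<open>C\<^sub>f(w) \<ge> x\<^sub>f + 1\<^sup>c\<close>,
  contradicting \<open>|C\<^sub>f(w)| \<le> |x\<^sub>f|\<close>.\<close>

lemma choice_function_inB:
  "choice_function Ev b C \<Longrightarrow> inB Ev b z \<Longrightarrow> inB Ev b (C z)"
  unfolding choice_function_def by blast

lemma choice_function_le:
  "choice_function Ev b C \<Longrightarrow> inB Ev b z \<Longrightarrow> C z \<le> z"
  unfolding choice_function_def by blast

lemma choice_function_consistent:
  "choice_function Ev b C \<Longrightarrow> inB Ev b z \<Longrightarrow> inB Ev b z' \<Longrightarrow> z' \<le> z \<Longrightarrow> C z \<le> z'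
    \<Longrightarrow> C z' = C z"
  unfolding choice_function_def by blast

lemma choice_function_substitutable:
  "choice_function Ev b C \<Longrightarrow> inB Ev b z \<Longrightarrow> inB Ev b z' \<Longrightarrow> z' \<le> z
    \<Longrightarrow> min (C z e) (z' e) \<le> C z' e"
  unfolding choice_function_def vmin_def le_fun_def by blast

lemma choice_function_size_mono:
  "choice_function Ev b C \<Longrightarrow> inB Ev b z \<Longrightarrow> inB Ev b z' \<Longrightarrow> z' \<le> z
    \<Longrightarrow> vnorm Ev (C z') \<le> vnorm Ev (C z)"
  unfolding choice_function_def by blast

lemma acceptable_choice:
  assumes "choice_function Ev b C" and "inB Ev b z"
  shows "acceptable C (C z)"
  using choice_function_consistent[OF assms choice_function_inB[OF assms]]
    choice_function_le[OF assms]
  unfolding acceptable_def by simp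

lemma interesting_below_capacity:
  assumes "interesting Ev b C z e"
  shows "z e < b e"
proof -
  obtain z' where "inB Ev b z'" and "z e < z' e"
    using assms unfolding interesting_def by blast
  then show ?thesis
    unfolding inB_def by (meson order.strict_trans2)
qed

lemma inB_restr: "(\<And>e. x e \<le> b e) \<Longrightarrow> inB Ev b (restr Ev x)"
  unfolding inB_def restr_def by simp

lemma inB_add_unitv:
  "inB Ev b z \<Longrightarrow> a \<in> Ev \<Longrightarrow> z a < b a \<Longrightarrow> inB Ev b (\<lambda>e. z e + unitv a e)"
  unfolding inB_def unitv_def by (auto simp: Suc_le_eq)

lemma vnorm_add_unitv:
  "finite Ev \<Longrightarrow> a \<in> Ev \<Longrightarrow> vnorm Ev (\<lambda>e. z e + unitv a e) = vnorm Ev z + 1"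
  unfolding vnorm_def unitv_def by (simp add: sum.distrib)

lemma vnorm_mono:
  "(\<And>e. e \<in> Ev \<Longrightarrow> z e \<le> z' e) \<Longrightarrow> vnorm Ev z \<le> vnorm Ev z'"
  unfolding vnorm_def by (rule sum_mono)

lemma choice_sup_le_if_rejected:
  assumes cf: "choice_function Ev b C" and zB: "inB Ev b z" and wB: "inB Ev b w"
    and w_le: "\<And>e. e \<noteq> c \<Longrightarrow> w e \<le> z e" and rejected: "C z c < z c"
  shows "C (vmax z w) \<le> C z"
proof (rule le_funI)
  fix e
  have uB: "inB Ev b (vmax z w)"
    using zB wB unfolding inB_def vmax_def by simp
  have "z \<le> vmax z w"
    unfolding vmax_def le_fun_def by simp
  then have subst: "min (C (vmax z w) e) (z e) \<le> C z e"
    using choice_function_substitutable[OF cf uB zB] by blast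
  show "C (vmax z w) e \<le> C z e"
  proof (cases "e = c")
    case True
    then show ?thesis using subst rejected by (simp add: min_def split: if_splits)
  next
    case False
    then have "C (vmax z w) e \<le> z e"
      using choice_function_le[OF cf uB] w_le unfolding vmax_def le_fun_def
      by (metis max.absorb1)
    then show ?thesis using subst by (simp add: min_def split: if_splits)
  qed
qed

lemma rejected_not_interesting_after:
  assumes cf: "choice_function Ev b C" and zB: "inB Ev b z"
    and rej: "\<And>e. C z e + unitv c e = z e"
  shows "\<not> interesting Ev b C (C z) c"
proof
  assume "interesting Ev b C (C z) c"
  then obtain w where wB: "inB Ev b w" and w_c: "C z c < w c" and w_c': "C z c < C w c"
    and w_other: "\<And>e. e \<noteq> c \<Longrightarrow> w e = C z e"
    unfolding interesting_def by blast
  have z_c: "z c = C z c + 1"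
    using rej[of c] unfolding unitv_def by simp
  have "z \<le> w"
  proof (rule le_funI)
    fix e
    show "z e \<le> w e"
      using rej[of e] w_other[of e] w_c z_c unfolding unitv_def by (cases "e = c") auto
  qed
  then have "min (C w c) (z c) \<le> C z c"
    using choice_function_substitutable[OF cf wB zB] by blast
  with w_c' z_c show False by linarith
qed

lemma pref_choice_add_unitv:
  assumes cf: "choice_function Ev b C" and zB: "inB Ev b z" and acc: "acceptable C x"
    and add: "\<And>e. z e = x e + unitv a e" and rej: "\<And>e. C z e + unitv c e = z e"
    and "a \<noteq> c"
  shows "pref C x (C z)"
proof -
  have "C z a = x a + 1"
    using rej[of a] add[of a] \<open>a \<noteq> c\<close> unfolding unitv_def by simp
  then have "C z \<noteq> x" by auto
  moreover have "vmax (C z) x = z"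
  proof
    fix e
    show "vmax (C z) x e = z e"
      using rej[of e] add[of e] \<open>a \<noteq> c\<close> unfolding vmax_def unitv_def
      by (cases "e = a"; cases "e = c") auto
  qed
  ultimately show ?thesis
    using acc acceptable_choice[OF cf zB] unfolding pref_def acceptable_def by simp
qed

lemma choice_sup_eq_if_rejected:
  assumes cf: "choice_function Ev b C" and fin: "finite Ev" and zB: "inB Ev b z"
    and wB: "inB Ev b w" and w_le: "\<And>e. e \<noteq> c \<Longrightarrow> w e \<le> z e" and rejected: "C z c < z c"
    and size: "vnorm Ev (C z) \<le> vnorm Ev (C w)" and "e \<in> Ev"
  shows "C (vmax z w) e = C z e"
proof -
  have uB: "inB Ev b (vmax z w)"
    using zB wB unfolding inB_def vmax_def by simp
  have "w \<le> vmax z w"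
    unfolding vmax_def le_fun_def by simp
  then have "vnorm Ev (C z) \<le> vnorm Ev (C (vmax z w))"
    using choice_function_size_mono[OF cf uB wB] size by simp
  moreover have le: "C (vmax z w) \<le> C z"
    using choice_sup_le_if_rejected[OF cf zB wB w_le rejected] .
  ultimately have "vnorm Ev (C (vmax z w)) = vnorm Ev (C z)"
    using vnorm_mono[of Ev "C (vmax z w)" "C z"] unfolding le_fun_def by fastforce
  then show ?thesis
    using sum_mono_inv[OF _ _ \<open>e \<in> Ev\<close> fin] le unfolding vnorm_def le_fun_def by blast
qed

lemma rejected_not_interesting_before:
  assumes cf: "choice_function Ev b C" and fin: "finite Ev" and aEv: "a \<in> Ev" and cEv: "c \<in> Ev"
    and xB: "inB Ev b x" and acc: "acceptable C x" and zB: "inB Ev b z"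
    and add: "\<And>e. z e = x e + unitv a e" and rej: "\<And>e. C z e + unitv c e = z e"
  shows "\<not> interesting Ev b C x c"
proof
  assume "interesting Ev b C x c"
  then obtain w where wB: "inB Ev b w" and w_c: "x c < w c" and w_c': "x c < C w c"
    and w_other: "\<And>e. e \<noteq> c \<Longrightarrow> w e = x e"
    unfolding interesting_def by blast
  define u where "u = vmax z w"
  have uB: "inB Ev b u"
    using zB wB unfolding u_def inB_def vmax_def by simp
  have w_le_u: "w \<le> u"
    unfolding u_def vmax_def le_fun_def by simp
  have x_le_w: "x \<le> w"
    using w_c w_other by (metis le_funI less_imp_le order_refl)
  have w_le_z: "w e \<le> z e" if "e \<noteq> c" for e
    using w_other[OF that] add[of e] by simp
  have rejected: "C z c < z c"
    using rej[of c] unfolding unitv_def by simp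
  have size_Cz: "vnorm Ev (C z) = vnorm Ev x"
    using vnorm_add_unitv[OF fin cEv, of "C z"] vnorm_add_unitv[OF fin aEv, of x] rej add
    by simp
  also have "\<dots> \<le> vnorm Ev (C w)"
    using choice_function_size_mono[OF cf wB xB x_le_w] acc unfolding acceptable_def by simp
  finally have Cu_eq: "C u e = C z e" if "e \<in> Ev" for e
    using choice_sup_eq_if_rejected[OF cf fin zB wB _ rejected _ that] w_le_z unfolding u_def
    by blast
  have "x e + unitv c e \<le> C w e" if "e \<in> Ev" for e
  proof (cases "e = c")
    case True
    then show ?thesis using w_c' unfolding unitv_def by simp
  next
    case False
    have "x e \<le> C z e"
      using rej[of e] add[of e] False unfolding unitv_def by simp
    then have "min (C u e) (w e) = x e"
      using Cu_eq[OF that] w_other[OF False] by simp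
    then show ?thesis
      using choice_function_substitutable[OF cf uB wB w_le_u, of e] False
      unfolding unitv_def by simp
  qed
  then have "vnorm Ev x + 1 \<le> vnorm Ev (C w)"
    using vnorm_mono[of Ev "\<lambda>e. x e + unitv c e" "C w"] vnorm_add_unitv[OF fin cEv, of x]
    by simp
  also have "\<dots> \<le> vnorm Ev (C u)"
    using choice_function_size_mono[OF cf uB wB w_le_u] .
  also have "\<dots> = vnorm Ev (C z)"
    using Cu_eq unfolding vnorm_def by simp
  finally show False
    using size_Cz by simp
qed

lemma instance_ok_finite_edges_at_f:
  "instance_ok W F E b CW CF \<Longrightarrow> finite (edges_at_f E f)"
  unfolding instance_ok_def edges_at_f_def
  by (metis (no_types, lifting) finite_SigmaI finite_subset mem_Collect_eq subsetI)

theorem lemma3p2: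
  fixes W :: "'w set" and F :: "'f set" and E :: "('w \<times> 'f) set" and b :: "('w,'f) vec"
    and CW :: "'w \<Rightarrow> ('w,'f) vec \<Rightarrow> ('w,'f) vec" and CF :: "'f \<Rightarrow> ('w,'f) vec \<Rightarrow> ('w,'f) vec"
    and x xmax :: "('w,'f) vec" and f :: 'f and a c :: "'w \<times> 'f"
  assumes inst: "instance_ok W F E b CW CF"
    and xmax: "is_max_stable W F E b CW CF xmax"
    and stab: "stable W F E b CW CF x"
    and neq: "x \<noteq> xmax"
    and fF: "f \<in> F"
    and legal: "legal_pair E b CF x f a c"
  defines "y \<equiv> (\<lambda>e. restr (edges_at_f E f) x e + unitv a e - unitv c e)"
  shows "c \<in> UFminus E b CF x \<and>
         pref (CF f) (restr (edges_at_f E f) x) y \<and>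
         \<not> interesting (edges_at_f E f) b (CF f) y c"
proof -
  define Ef where "Ef = edges_at_f E f"
  define xf where "xf = restr Ef x"
  define z where "z = (\<lambda>e. xf e + unitv a e)"
  have cf: "choice_function Ef b (CF f)" and fin: "finite Ef"
    using inst fF instance_ok_finite_edges_at_f[OF inst] unfolding instance_ok_def Ef_def by auto
  have xB: "inB Ef b xf" and acc: "acceptable (CF f) xf"
    using stab fF inB_restr unfolding stable_def g_matching_def xf_def Ef_def by auto
  have aEf: "a \<in> Ef" and cEf: "c \<in> Ef" and "c \<noteq> a"
    and a_int: "interesting Ef b (CF f) xf a"
    using legal unfolding legal_pair_def UFplus_def Ef_def edges_at_f_def xf_def by auto
  have rej: "\<And>e. CF f z e + unitv c e = z e"
    using legal unfolding legal_pair_def z_def xf_def Ef_def by metis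
  have zB: "inB Ef b z"
    using inB_add_unitv[OF xB aEf interesting_below_capacity[OF a_int]] unfolding z_def .
  have y_eq: "y = CF f z"
    unfolding y_def by (rule ext) (metis rej z_def xf_def Ef_def add_diff_cancel_right')
  have "0 < xf c"
    using rej[of c] \<open>c \<noteq> a\<close> unfolding z_def unitv_def by simp
  moreover have "\<not> interesting Ef b (CF f) xf c"
    using rejected_not_interesting_before[OF cf fin aEf cEf xB acc zB _ rej] z_def by simp
  ultimately have "c \<in> UFminus E b CF x"
    using cEf unfolding UFminus_def xf_def Ef_def restr_def edges_at_f_def by simp
  moreover have "pref (CF f) xf y"
    using pref_choice_add_unitv[OF cf zB acc _ rej \<open>c \<noteq> a\<close>[symmetric]] y_eq z_def
    by simp
  moreover have "\<not> interesting Ef b (CF f) y c"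
    using rejected_not_interesting_after[OF cf zB rej] y_eq by simp
  ultimately show ?thesis
    unfolding xf_def Ef_def by blast
qed

end
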